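(* Let \(\mathcal{G}=\langle x,y,t \mid x^7, y^2, (xy)^3, [x,y]^4, t^2, [t^{x^2},yx^{-1}], [t,y], (yt^{x^2})^5, (xyx^2t^x)^5, (xt)^8\rangle\). Then \(|\mathcal{G}|\ge 443{,}520\).
   Context: Conventions: \(a^g=g^{-1}ag\) and \([a,b]=a^{-1}b^{-1}ab\). *)

theory Defs
  imports Main
begin

text \<open>A letter is (generator, is_inverse).\<close>

type_synonym 'g word = "('g \<times> bool) list"

definition winv :: "'g word \<Rightarrow> 'g word" where
  "winv w = rev (map (\<lambda>(g, b). (g, \<not> b)) w)"

definition wgen :: "'g \<Rightarrow> 'g word" where
  "wgen g = [(g, False)]"

definition wpow :: "'g word \<Rightarrow> nat \<Rightarrow> 'g word" where
  "wpow w n = concat (replicate n w)"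

text \<open>Conventions: a^g = g^-1 a g and [a,b] = a^-1 b^-1 a b.\<close>
definition wconj :: "'g word \<Rightarrow> 'g word \<Rightarrow> 'g word" where
  "wconj a g = winv g @ a @ g"

definition wcomm :: "'g word \<Rightarrow> 'g word \<Rightarrow> 'g word" where
  "wcomm a b = winv a @ winv b @ a @ b"

inductive pres_eq :: "'g word set \<Rightarrow> 'g word \<Rightarrow> 'g word \<Rightarrow> bool" for R where
  refl: "pres_eq R u u"
| sym: "pres_eq R u v \<Longrightarrow> pres_eq R v u"
| trans: "pres_eq R u v \<Longrightarrow> pres_eq R v w \<Longrightarrow> pres_eq R u w"
| cong: "pres_eq R u v \<Longrightarrow> pres_eq R (a @ u @ b) (a @ v @ b)"
| cancel: "pres_eq R [(g, b), (g, \<not> b)] []"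
| relator: "r \<in> R \<Longrightarrow> pres_eq R r []"

definition presented_group :: "'g word set \<Rightarrow> 'g word set set" where
  "presented_group R = UNIV // {(u, v). pres_eq R u v}"

datatype gen3 = X | Y | T

definition x :: "gen3 word" where "x = wgen X"
definition y :: "gen3 word" where "y = wgen Y"
definition t :: "gen3 word" where "t = wgen T"

definition relators_G :: "gen3 word set" where
  "relators_G = {
     wpow x 7,
     wpow y 2,
     wpow (x @ y) 3,
     wpow (wcomm x y) 4,
     wpow t 2,
     wcomm (wconj t (wpow x 2)) (y @ winv x),
     wcomm t y,
     wpow (y @ wconj t (wpow x 2)) 5,
     wpow (x @ y @ wpow x 2 @ wconj t x) 5,
     wpow (x @ t) 8 }"

end

theory Submission
  imports Defs
begin

text \<open>Explicit permutations of the 22 points 0, ..., 21 assigned to x, y, t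
  satisfy every relator, so they extend to an action of the presented group; distinct
  permutations come from distinct group elements. A stabilizer chain with base 0, 1, 2 then
  exhibits 22 * 21 * 20 * 48 = 443520 distinct permutations in the image.\<close>

lemma fold_eq_if_pres_eq:
  assumes cancel: "\<And>g b. \<sigma> (g, \<not> b) \<circ> \<sigma> (g, b) = id"
    and relators: "\<And>r. r \<in> R \<Longrightarrow> fold \<sigma> r = id"
  shows "pres_eq R u v \<Longrightarrow> fold \<sigma> u = fold \<sigma> v"
  by (induction rule: pres_eq.induct) (auto simp: cancel relators)

lemma inj_fold:
  assumes cancel: "\<And>g b. \<sigma> (g, \<not> b) \<circ> \<sigma> (g, b) = id"
  shows "inj (fold \<sigma> w)"
proof (induction w)
  case (Cons l w)
  obtain g b where l: "l = (g, b)"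
    by fastforce
  have "inj (\<sigma> l)"
    unfolding l by (rule inj_on_inverseI[of _ "\<sigma> (g, \<not> b)"]) (metis cancel comp_apply id_apply)
  then show ?case
    using inj_compose[OF Cons.IH] by (simp add: comp_def)
qed simp

lemma fold_fixes:
  assumes "\<And>l. \<sigma> l p = p"
  shows "fold \<sigma> w p = p"
  by (induction w) (simp_all add: assms)

lemma card_le_card_presented_group:
  assumes respects: "\<And>u v. pres_eq R u v \<Longrightarrow> f u = f v"
    and finite: "finite (presented_group R)"
    and S: "S \<subseteq> range f"
  shows "card S \<le> card (presented_group R)"
proof -
  define rel where "rel = {(u, v). pres_eq R u v}"
  define value_of where "value_of C = f (SOME u. u \<in> C)" for C
  have "f u \<in> value_of ` presented_group R" for u
  proof
    show "rel `` {u} \<in> presented_group R"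
      unfolding presented_group_def rel_def by (rule quotientI) simp
    have "u \<in> rel `` {u}"
      unfolding rel_def by (simp add: pres_eq.refl)
    then have "(SOME v. v \<in> rel `` {u}) \<in> rel `` {u}"
      by (rule someI)
    then have "pres_eq R u (SOME v. v \<in> rel `` {u})"
      unfolding rel_def by simp
    then show "f u = value_of (rel `` {u})"
      unfolding value_of_def by (rule respects)
  qed
  then have "S \<subseteq> value_of ` presented_group R"
    using S by blast
  then have "card S \<le> card (value_of ` presented_group R)"
    using finite by (simp add: card_mono)
  also have "\<dots> \<le> card (presented_group R)"
    by (rule card_image_le[OF finite])
  finally show ?thesis .
qed

definition compose_sets :: "('b \<Rightarrow> 'c) set \<Rightarrow> ('a \<Rightarrow> 'b) set \<Rightarrow> ('a \<Rightarrow> 'c) set" where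
  "compose_sets A B = (\<lambda>(a, b). a \<circ> b) ` (A \<times> B)"

lemma card_compose_sets:
  assumes inj: "\<forall>a\<in>A. inj a"
    and separates: "inj_on (\<lambda>a. a p) A"
    and fixed: "\<forall>b\<in>B. b p = p"
  shows "card (compose_sets A B) = card A * card B"
proof -
  have "inj_on (\<lambda>(a, b). a \<circ> b) (A \<times> B)"
  proof (rule inj_onI, clarify)
    fix a b a' b'
    assume mem: "a \<in> A" "b \<in> B" "a' \<in> A" "b' \<in> B" and eq: "a \<circ> b = a' \<circ> b'"
    have "b p = p" "b' p = p"
      using fixed mem by auto
    then have "a p = a' p"
      using fun_cong[OF eq, of p] by simp
    then have "a = a'"
      using separates mem by (auto dest: inj_onD)
    moreover have "b = b'"
      using eq inj mem unfolding \<open>a = a'\<close> by (auto simp: fun_eq_iff dest: injD)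
    ultimately show "a = a' \<and> b = b'" ..
  qed
  then show ?thesis
    by (simp add: compose_sets_def card_image card_cartesian_product)
qed

lemma compose_sets_fixes:
  "\<forall>a\<in>A. a p = p \<Longrightarrow> \<forall>b\<in>B. b p = p \<Longrightarrow> \<forall>c\<in>compose_sets A B. c p = p"
  by (auto simp: compose_sets_def)

lemma compose_sets_inj:
  "\<forall>a\<in>A. inj a \<Longrightarrow> \<forall>b\<in>B. inj b \<Longrightarrow> \<forall>c\<in>compose_sets A B. inj c"
  by (auto simp: compose_sets_def inj_compose)

lemma compose_sets_subset_range_fold:
  assumes "A \<subseteq> range (fold \<sigma>)" "B \<subseteq> range (fold \<sigma>)"
  shows "compose_sets A B \<subseteq> range (fold \<sigma>)"
proof
  fix c assume "c \<in> compose_sets A B"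
  then obtain a b where "a \<in> A" "b \<in> B" "c = a \<circ> b"
    unfolding compose_sets_def by auto
  moreover obtain u v where "a = fold \<sigma> v" "b = fold \<sigma> u"
    using assms \<open>a \<in> A\<close> \<open>b \<in> B\<close> by blast
  ultimately show "c \<in> range (fold \<sigma>)"
    by (metis fold_append rangeI)
qed

lemma eq_id_if_fixes_upt:
  assumes "map f [0..<n] = [0..<n]" and "\<And>i. n \<le> i \<Longrightarrow> f i = i"
  shows "f = id"
proof
  fix i show "f i = id i"
    using assms map_eq_conv[of f "[0..<n]" id] by (cases "i < n") auto
qed

definition perm_of_list :: "nat list \<Rightarrow> nat \<Rightarrow> nat" where
  "perm_of_list ps i = (if i < length ps then ps ! i else i)"

fun gen_perm :: "gen3 \<times> bool \<Rightarrow> nat \<Rightarrow> nat" where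
  "gen_perm (X, False) = perm_of_list [10,17,11,8,0,6,4,20,19,15,2,5,3,1,12,14,7,16,13,9,18,21]"
| "gen_perm (X, True) = perm_of_list [4,13,10,12,6,11,5,16,3,19,0,2,14,18,15,9,17,1,20,8,7,21]"
| "gen_perm (Y, _) = perm_of_list [11,7,2,8,6,5,4,1,3,19,10,0,15,18,21,12,16,17,13,9,20,14]"
| "gen_perm (T, _) = perm_of_list [8,21,2,11,12,5,15,14,0,18,10,3,4,19,7,6,16,17,9,13,20,1]"

lemma gen_perm_fixes: "22 \<le> i \<Longrightarrow> gen_perm l i = i"
  by (cases l rule: gen_perm.cases) (simp_all add: perm_of_list_def)

lemma gen_perm_cancel: "gen_perm (g, \<not> b) \<circ> gen_perm (g, b) = id"
proof (rule eq_id_if_fixes_upt)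
  show "map (gen_perm (g, \<not> b) \<circ> gen_perm (g, b)) [0..<22] = [0..<22]"
    by (induct g; induct b) code_simp+
qed (simp add: gen_perm_fixes)

lemma gen_perm_relators: "r \<in> relators_G \<Longrightarrow> fold gen_perm r = id"
proof (rule eq_id_if_fixes_upt)
  have "\<forall>r\<in>relators_G. map (fold gen_perm r) [0..<22] = [0..<22]"
    \<comment> \<open>splitting the set literal into a conjunction first keeps the evaluation fast\<close>
    unfolding relators_G_def ball_simps(5,7) by code_simp
  then show "r \<in> relators_G \<Longrightarrow> map (fold gen_perm r) [0..<22] = [0..<22]"
    by (rule bspec)
qed (simp add: fold_fixes gen_perm_fixes)

definition letter :: "char \<Rightarrow> gen3 \<times> bool" where
  "letter c = (if c = CHR ''x'' then (X, False) else if c = CHR ''X'' then (X, True)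
     else if c = CHR ''y'' then (Y, False) else (T, False))"

definition word_perm :: "string \<Rightarrow> nat \<Rightarrow> nat" where
  "word_perm s = fold gen_perm (map letter s)"

lemma inj_word_perm: "inj (word_perm s)"
  unfolding word_perm_def using gen_perm_cancel by (rule inj_fold)

definition reps_0 :: "(nat \<Rightarrow> nat) list" where
  "reps_0 = map word_perm
    ['''', ''txtx'', ''xx'', ''yt'', ''X'', ''yx'', ''XX'', ''XtXt'', ''t'',
     ''txx'', ''x'', ''y'', ''Xt'', ''txt'', ''XtX'', ''XXt'', ''XtXtX'',
     ''txtxx'', ''txxt'', ''tx'', ''XtXtx'', ''XtXy'']"

definition reps_1 :: "(nat \<Rightarrow> nat) list" where
  "reps_1 = map word_perm
    ['''', ''ytxtxyX'', ''ytxtxtX'', ''ytxt'', ''XtxxtxyX'', ''Xtxxt'',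
     ''tXyt'', ''tXtXXytX'', ''XtxxtxytX'', ''XtXXytx'', ''XXtXXXt'',
     ''ytxtxytX'', ''Xtxyt'', ''XtxxtxtX'', ''XtxtXXtX'', ''XtxtXXX'',
     ''tXXtx'', ''txyXXt'', ''tXtXXtX'', ''tXtXXX'', ''XtxytxtX'']"

definition reps_2 :: "(nat \<Rightarrow> nat) list" where
  "reps_2 = map word_perm
    ['''', ''xytX'', ''xyX'', ''XXyx'', ''XyXXy'', ''xytxtxy'', ''XyXtXy'',
     ''xtxxy'', ''xtxtxy'', ''Xyxx'', ''xtX'', ''xytXyxtXy'', ''xtxyXX'',
     ''yxtXy'', ''xtXyxtXy'', ''yxtXXtXX'', ''xytxyXtX'', ''xytxxy'',
     ''xytxtXX'', ''XXXtXy'']"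

definition reps_3 :: "(nat \<Rightarrow> nat) list" where
  "reps_3 = map word_perm
    ['''', ''xxyXX'', ''xxtXX'', ''xyxxy'', ''yXtxy'', ''xxytXX'',
     ''xyxtxy'', ''xxxyxxxy'', ''xxtXyxxy'', ''xxxyxxtxy'', ''xxytXyxxy'',
     ''xxtXyxtxy'', ''tXtxyXtxt'', ''xxytXyxtxy'', ''xxtXXyXtxy'',
     ''xxytXXyXtxy'', ''xytxxxytxxx'', ''xytXXyxxxtX'', ''xtxyXtxtXtX'',
     ''xtxtXXXyXXy'', ''xtxtXtxyXtX'', ''xtXXXyxxytX'', ''XXXytXXXytX'',
     ''XyXXyxxtXtX'', ''xtxxyxtXXyxx'', ''xtXyxxxyXtXy'', ''XXXytXXXtxxy'',
     ''XXXtxxyXtxxx'', ''XXyxxytxyXtX'', ''XXyxxtxxxtXy'', ''XyXtxxxyxtXy'',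
     ''XyXtxyXXytXy'', ''yxtxyXXXyxtX'', ''yxtXXXtXXyxx'',
     ''xxtxxytXXXytX'', ''xyXXXyxxxtXtX'', ''xyXXyxxyXtXtX'',
     ''xytxxxytXXtXX'', ''xytXyxxyXXtXy'', ''xtxtxyXXyxxyX'',
     ''xtXXXyxxtxtxy'', ''XXXtXXyxxytXy'', ''XyXXXytxxytXy'',
     ''XyXtXXyxxtxxx'', ''XyXtXXytxxxyx'', ''yXtXtXXyxxxtX'',
     ''xxytxxytXXXytX'', ''xxtXytxxxytxxx'']"

lemma reps_0: "length reps_0 = 22" "distinct (map (\<lambda>a. a 0) reps_0)"
  by code_simp+

lemma reps_1: "length reps_1 = 21" "distinct (map (\<lambda>a. a 1) reps_1)"
  "list_all (\<lambda>a. a 0 = 0) reps_1"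
  by code_simp+

lemma reps_2: "length reps_2 = 20" "distinct (map (\<lambda>a. a 2) reps_2)"
  "list_all (\<lambda>a. a 0 = 0 \<and> a 1 = 1) reps_2"
  by code_simp+

lemma reps_3: "length reps_3 = 48" "distinct (map (\<lambda>a. (a 3, a 4)) reps_3)"
  "list_all (\<lambda>a. a 0 = 0 \<and> a 1 = 1 \<and> a 2 = 2) reps_3"
  by code_simp+

definition transversal_product :: "(nat \<Rightarrow> nat) set" where
  "transversal_product =
     compose_sets (set reps_0) (compose_sets (set reps_1) (compose_sets (set reps_2) (set reps_3)))"

lemma card_transversal_product: "card transversal_product = 22 * 21 * 20 * 48"
proof -
  have inj: "\<forall>a\<in>set reps_0. inj a" "\<forall>a\<in>set reps_1. inj a"
    "\<forall>a\<in>set reps_2. inj a" "\<forall>a\<in>set reps_3. inj a"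
    by (simp_all add: reps_0_def reps_1_def reps_2_def reps_3_def inj_word_perm)
  define C where "C = compose_sets (set reps_2) (set reps_3)"
  define B where "B = compose_sets (set reps_1) C"
  have card_C: "card C = 20 * 48"
    unfolding C_def using inj(3) reps_2(1,2) reps_3
    by (subst card_compose_sets[where p = 2]) (auto simp: distinct_map distinct_card list_all_iff)
  have C: "\<forall>c\<in>C. inj c" "\<forall>c\<in>C. c 0 = 0" "\<forall>c\<in>C. c 1 = 1"
    unfolding C_def using inj(3,4) reps_2(3) reps_3(3)
    by (intro compose_sets_inj compose_sets_fixes; auto simp: list_all_iff)+
  have card_B: "card B = 21 * (20 * 48)"
    unfolding B_def using inj(2) reps_1 C card_C
    by (subst card_compose_sets[where p = 1]) (auto simp: distinct_map distinct_card list_all_iff)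
  have B: "\<forall>b\<in>B. b 0 = 0"
    unfolding B_def using reps_1(3) C(2)
    by (intro compose_sets_fixes) (auto simp: list_all_iff)
  show ?thesis
    unfolding transversal_product_def C_def[symmetric] B_def[symmetric]
    using inj(1) reps_0 B card_B
    by (subst card_compose_sets[where p = 0]) (auto simp: distinct_map distinct_card)
qed

lemma transversal_product_subset_range_fold: "transversal_product \<subseteq> range (fold gen_perm)"
proof -
  have "set (map word_perm ws) \<subseteq> range (fold gen_perm)" for ws
    by (auto simp: word_perm_def)
  then show ?thesis
    unfolding transversal_product_def reps_0_def reps_1_def reps_2_def reps_3_def
    by (intro compose_sets_subset_range_fold)
qed

theorem corollary2p2:
  shows "infinite (presented_group relators_G) \<or> card (presented_group relators_G) \<ge> 443520"
proof (cases "finite (presented_group relators_G)")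
  case True
  have "card transversal_product \<le> card (presented_group relators_G)"
    using fold_eq_if_pres_eq[OF gen_perm_cancel gen_perm_relators] True transversal_product_subset_range_fold
    by (rule card_le_card_presented_group)
  then show ?thesis
    by (simp add: card_transversal_product)
qed simp

end
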